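(* For every integer $n\ge 0$, \[ \sum_{k=0}^{n}(-4)^k\frac{\binom{n}{k}}{\binom{1+2k}{k}}\,k^2H_{1+2k} =\frac{2n(4n-1)\{2H_{1+2n}-H_n\}}{(4n^2-1)(2n-3)(2n-5)} -\frac{2n(32n^6+160n^5-544n^4-560n^3+1482n^2-382n-17)}{(4n^2-1)^2(2n-3)^2(2n-5)^2}. \]
   Context: For an integer $m\ge 0$, $H_m$ denotes the $m$-th harmonic number: $H_0=0$ and $H_m=\sum_{j=1}^m \frac1j$ for $m\ge1$. $\binom{n}{k}$ is the usual binomial coefficient. *)

theory Defs
  imports "HOL-Analysis.Analysis"
begin

end

theory Submission
  imports Defs
begin

text \<open>Creative telescoping. Write the summand as \<open>F(n,k) = a(n,k) k\<^sup>2 H\<^sub>2\<^sub>k\<^sub>+\<^sub>1\<close> with the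
hypergeometric factor \<open>a(n,k) = (-4)\<^sup>k binom(n,k) / binom(2k+1,k)\<close>. The certificate
\<open>G(n,k) = a(n+1,k) (P(n,k) H\<^sub>2\<^sub>k\<^sub>+\<^sub>1 + Q(n,k))\<close>, with \<open>P\<close> polynomial and \<open>Q\<close> rational,
satisfies \<open>c\<^sub>0(n)(n+1) F(n,k) + c\<^sub>1(n) F(n+1,k) = G(n,k+1) - G(n,k)\<close>; since
\<open>H\<^sub>2\<^sub>k\<^sub>+\<^sub>3 - H\<^sub>2\<^sub>k\<^sub>+\<^sub>1\<close> and \<open>a(n+1,k+1)/a(n+1,k)\<close> are rational in \<open>k\<close>, this reduces to two rational
identities, one for the coefficient of \<open>H\<^sub>2\<^sub>k\<^sub>+\<^sub>1\<close> and one for the rest. Summing over \<open>k\<close>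
gives a first-order inhomogeneous recurrence for the sum; the right-hand side satisfies the
same recurrence, and \<open>c\<^sub>1(n) \<noteq> 0\<close> for \<open>n \<ge> 1\<close>, so induction from \<open>n = 1\<close> finishes.\<close>

definition hyper_term :: "nat \<Rightarrow> nat \<Rightarrow> real" where
  "hyper_term n k = (-4)^k * (real (n choose k) / real ((1 + 2*k) choose k))"

definition summand :: "nat \<Rightarrow> nat \<Rightarrow> real" where
  "summand n k = hyper_term n k * (real k)^2 * harm (1 + 2*k)"

definition harm_binomial_sum :: "nat \<Rightarrow> real" where
  "harm_binomial_sum n = (\<Sum>k=0..n. summand n k)"

definition closed_form :: "real \<Rightarrow> real \<Rightarrow> real" where
  "closed_form x e = 2 * x * (4 * x - 1) * e / ((4 * x^2 - 1) * (2 * x - 3) * (2 * x - 5))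
     - 2 * x * (32 * x^6 + 160 * x^5 - 544 * x^4 - 560 * x^3 + 1482 * x^2 - 382 * x - 17)
       / ((4 * x^2 - 1)^2 * (2 * x - 3)^2 * (2 * x - 5)^2)"

text \<open>\<open>hyper_ratio m k = a(m,k+1) / a(m,k)\<close>, extended to real arguments.\<close>

definition hyper_ratio :: "real \<Rightarrow> real \<Rightarrow> real" where
  "hyper_ratio m y = -2 * (m - y) * (y + 2) / ((y + 1) * (2*y + 3))"

text \<open>The recurrence coefficients and the certificate are the output of Zeilberger's algorithm;
below they are only verified.\<close>

definition rec_coeff0 :: "real \<Rightarrow> real" where
  "rec_coeff0 x = (2*x - 5)^2 * (2*x - 3) * (2*x - 1) * (2*x + 1) * (2*x + 3) * (4*x + 3)"

definition rec_coeff1 :: "real \<Rightarrow> real" where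
  "rec_coeff1 x = - x * (2*x + 3)^2 * (4*x - 1) * (2*x - 5) * (2*x - 3) * (2*x - 1) * (2*x + 1)"

definition cert_harm_coeff :: "real \<Rightarrow> real \<Rightarrow> real" where
  "cert_harm_coeff x y = (-180 + x * (-108 + x * (872 + x * (480 + x * (-640 + x * (-192 + x * 128)))))) * y
     + (-45 + x * (18 + x * (200 + x * (-80 + x * (-80 + x * 32))))) * y^2
     + (495 + x * (342 + x * (-2416 + x * (-1520 + x * (1840 + x * (608 + x * (-384))))))) * y^3
     + (-270 + x * (-252 + x * (1344 + x * (1120 + x * (-1120 + x * (-448 + x * 256)))))) * y^4"

definition cert_rest_num :: "real \<Rightarrow> real \<Rightarrow> real" where
  "cert_rest_num x y = (x * (-612 + x * (-292 + x * (1488 + x * (1328 + x * (96 + x * (-64)))))))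
     + (462 + x * (-712 + x * (-2310 + x * (1244 + x * (2792 + x * (80 + x * (-320))))))) * y
     + (1119 + x * (3425 + x * (-3246 + x * (-9220 + x * (-4328 + x * (-640 + x * (-64))))))) * y^2
     + (-360 + x * (3183 + x * (2000 + x * (-6416 + x * (-5904 + x * (80 + x * 832)))))) * y^3
     + (-1515 + x * (-3146 + x * (3400 + x * (9984 + x * (6000 + x * (1184 + x * 128)))))) * y^4
     + (78 + x * (328 + x * (-32 + x * (-1056 + x * (-992 + x * (-1024 + x * (-512))))))) * y^5
     + (216 + x * (288 + x * (-960 + x * (-1280 + x * (384 + x * 512))))) * y^6"

definition cert_rest :: "real \<Rightarrow> real \<Rightarrow> real" where
  "cert_rest x y = cert_rest_num x y / ((2*y + 1) * (y + 1))"

definition certificate :: "nat \<Rightarrow> nat \<Rightarrow> real" where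
  "certificate n k = hyper_term (Suc n) k *
     (cert_harm_coeff (real n) (real k) * harm (1 + 2*k) + cert_rest (real n) (real k))"

lemma Suc_times_binomial_Suc_real:
  "real (Suc k) * real (m choose Suc k) = (real m - real k) * real (m choose k)"
  by (simp only: binomial_gbinomial gbinomial_absorption gbinomial_absorb_comp)

lemma binomial_Suc_left_real:
  "(real n + 1 - real k) * real (Suc n choose k) = (real n + 1) * real (n choose k)"
  using gbinomial_absorb_comp[of "real (Suc n)" k] by (simp add: binomial_gbinomial ac_simps)

lemma odd_central_binomial_Suc:
  "(k + 2) * ((1 + 2 * Suc k) choose Suc k) = 2 * (2*k + 3) * ((1 + 2*k) choose k)"
proof -
  have top: "Suc k * ((2*k + 3) choose Suc k) = (2*k + 3) * ((2*k + 2) choose k)"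
    using Suc_times_binomial[of k "2*k + 2"] by (simp add: numeral_eq_Suc)
  have bottom: "(k + 2) * ((2*k + 2) choose k) = (2*k + 2) * ((2*k + 1) choose k)"
    using binomial_absorb_comp[of "2*k + 2" k] by (simp add: numeral_eq_Suc)
  have "Suc k * ((k + 2) * ((2*k + 3) choose Suc k))
      = (2*k + 3) * ((k + 2) * ((2*k + 2) choose k))"
    by (metis top mult.left_commute)
  also have "\<dots> = (2*k + 3) * ((2*k + 2) * ((2*k + 1) choose k))"
    by (simp only: bottom)
  also have "\<dots> = Suc k * (2 * (2*k + 3) * ((2*k + 1) choose k))"
    by (simp add: algebra_simps)
  finally have "(k + 2) * ((2*k + 3) choose Suc k) = 2 * (2*k + 3) * ((2*k + 1) choose k)"
    by (simp only: Suc_mult_cancel1)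
  moreover have "1 + 2 * Suc k = 2*k + 3" "1 + 2*k = 2*k + 1"
    by simp_all
  ultimately show ?thesis
    by (simp only:)
qed

lemma hyper_term_Suc_left:
  "(real n + 1) * hyper_term n k = (real n + 1 - real k) * hyper_term (Suc n) k"
proof -
  have "(real n + 1) * hyper_term n k
      = (-4)^k * ((real n + 1) * real (n choose k)) / real ((1 + 2*k) choose k)"
    by (simp add: hyper_term_def)
  also have "\<dots> = (-4)^k * ((real n + 1 - real k) * real (Suc n choose k)) / real ((1 + 2*k) choose k)"
    by (simp only: binomial_Suc_left_real)
  also have "\<dots> = (real n + 1 - real k) * hyper_term (Suc n) k"
    by (simp add: hyper_term_def)
  finally show ?thesis .
qed

lemma hyper_term_Suc_right:
  "hyper_term m (Suc k) = hyper_ratio (real m) (real k) * hyper_term m k"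
proof -
  have binomial_Suc: "real (m choose Suc k) = (real m - real k) * real (m choose k) / (real k + 1)"
    using Suc_times_binomial_Suc_real[of k m] by (simp add: eq_divide_eq ac_simps)
  have central_Suc: "real ((1 + 2 * Suc k) choose Suc k)
      = 2 * (2 * real k + 3) * real ((1 + 2*k) choose k) / (real k + 2)"
  proof -
    have "real ((k + 2) * ((1 + 2 * Suc k) choose Suc k))
        = real (2 * (2*k + 3) * ((1 + 2*k) choose k))"
      by (simp only: odd_central_binomial_Suc)
    then have "(real k + 2) * real ((1 + 2 * Suc k) choose Suc k)
        = 2 * (2 * real k + 3) * real ((1 + 2*k) choose k)"
      by (simp only: of_nat_mult of_nat_add of_nat_numeral)
    then show ?thesis
      by (simp add: eq_divide_eq ac_simps del: binomial_Suc_Suc)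
  qed
  have "real ((1 + 2*k) choose k) > 0" "real k + 1 > 0" "real k + 2 > 0" "2 * real k + 3 > 0"
    by simp_all
  then show ?thesis
    unfolding hyper_term_def hyper_ratio_def binomial_Suc central_Suc
    by (simp add: divide_simps) (simp add: algebra_simps)
qed

lemma harm_odd_Suc:
  "(harm (1 + 2 * Suc k) :: real) = harm (1 + 2*k) + 1 / (2 * real k + 2) + 1 / (2 * real k + 3)"
proof -
  have "1 + 2 * Suc k = Suc (Suc (1 + 2*k))"
    by simp
  then show ?thesis
    by (simp only: harm_Suc) (simp add: inverse_eq_divide algebra_simps)
qed

lemma harm_odd_combination_Suc:
  "2 * harm (1 + 2 * Suc n) - harm (Suc n) = 2 * harm (1 + 2*n) - harm n + 2 / (2 * real n + 3 :: real)"
proof -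
  have "2 * (1 / (2 * real n + 2)) = 1 / (real n + 1)"
    by (simp add: field_simps)
  then show ?thesis
    by (simp add: harm_odd_Suc harm_Suc inverse_eq_divide algebra_simps)
qed

lemma certificate_identity:
  fixes x y h :: real
  assumes "y \<ge> 0"
  shows "(rec_coeff0 x * (x + 1 - y) + rec_coeff1 x) * y^2 * h
    = hyper_ratio (x + 1) y * (cert_harm_coeff x (y + 1) * (h + 1 / (2*y + 2) + 1 / (2*y + 3))
        + cert_rest x (y + 1))
      - (cert_harm_coeff x y * h + cert_rest x y)"
    (is "?c * h = ?r * (?p1 * (h + ?s1 + ?s2) + ?q1) - (?p0 * h + ?q0)")
proof -
  have nz: "y + 1 \<noteq> 0" "y + 1 + 1 \<noteq> 0" "2*y + 1 \<noteq> 0" "2*y + 2 \<noteq> 0" "2*y + 3 \<noteq> 0"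
    "2*(y + 1) + 1 \<noteq> 0"
    using assms by simp_all
  have harm_coeff: "?c = ?r * ?p1 - ?p0"
  proof -
    have "(y + 1) * (2*y + 3) * ?c = -2 * (x + 1 - y) * (y + 2) * ?p1 - (y + 1) * (2*y + 3) * ?p0"
      unfolding rec_coeff0_def rec_coeff1_def cert_harm_coeff_def by algebra
    with nz show ?thesis
      unfolding hyper_ratio_def by (simp add: divide_simps) algebra
  qed
  have rest: "?r * (?p1 * (?s1 + ?s2) + ?q1) = ?q0"
  proof -
    have "(x + 1 - y) * (2*y + 1) * ((4*y + 5) * (y + 2) * ?p1 + 2 * (y + 1) * cert_rest_num x (y + 1))
        + (y + 1) * (2*y + 3)^2 * cert_rest_num x y = 0"
      unfolding cert_harm_coeff_def cert_rest_num_def by algebra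
    with nz show ?thesis
      unfolding hyper_ratio_def cert_rest_def by (simp add: divide_simps) algebra
  qed
  have "?r * (?p1 * (h + ?s1 + ?s2) + ?q1) - (?p0 * h + ?q0)
      = (?r * ?p1 - ?p0) * h + (?r * (?p1 * (?s1 + ?s2) + ?q1) - ?q0)"
    by (simp add: algebra_simps)
  also have "\<dots> = ?c * h"
    by (simp only: harm_coeff rest)
  finally show ?thesis ..
qed

lemma summand_telescoping:
  "rec_coeff0 (real n) * (real n + 1) * summand n k + rec_coeff1 (real n) * summand (Suc n) k
     = certificate n (Suc k) - certificate n k"
proof -
  define x y h V where "x = real n" and "y = real k" and "h = (harm (1 + 2*k) :: real)"
    and "V = hyper_term (Suc n) k"
  have y_nonneg: "y \<ge> 0"
    by (simp add: y_def)
  have shift_n: "(x + 1) * hyper_term n k = (x + 1 - y) * V"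
    unfolding x_def y_def V_def by (rule hyper_term_Suc_left)
  have "rec_coeff0 x * (x + 1) * summand n k + rec_coeff1 x * summand (Suc n) k
      = rec_coeff0 x * ((x + 1) * hyper_term n k) * y^2 * h + rec_coeff1 x * V * y^2 * h"
    by (simp add: summand_def y_def h_def V_def ac_simps)
  also have "\<dots> = V * ((rec_coeff0 x * (x + 1 - y) + rec_coeff1 x) * y^2 * h)"
    by (simp only: shift_n) (simp add: algebra_simps)
  also have "\<dots> = hyper_ratio (x + 1) y * V
        * (cert_harm_coeff x (y + 1) * (h + 1 / (2*y + 2) + 1 / (2*y + 3)) + cert_rest x (y + 1))
      - V * (cert_harm_coeff x y * h + cert_rest x y)"
    by (simp only: certificate_identity[OF y_nonneg]) (simp add: algebra_simps)
  also have "\<dots> = certificate n (Suc k) - certificate n k"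
    by (simp only: certificate_def hyper_term_Suc_right harm_odd_Suc)
      (simp add: x_def y_def h_def V_def ac_simps)
  finally show ?thesis
    by (simp only: x_def)
qed

lemma harm_binomial_sum_recurrence:
  "rec_coeff0 (real n) * (real n + 1) * harm_binomial_sum n
     + rec_coeff1 (real n) * harm_binomial_sum (Suc n) = - cert_rest_num (real n) 0"
proof -
  have "summand n (Suc n) = 0"
    by (simp add: summand_def hyper_term_def)
  then have sum_n: "harm_binomial_sum n = (\<Sum>k<Suc (Suc n). summand n k)"
    by (simp only: sum.lessThan_Suc harm_binomial_sum_def atLeast0AtMost lessThan_Suc_atMost) simp
  have sum_Suc: "harm_binomial_sum (Suc n) = (\<Sum>k<Suc (Suc n). summand (Suc n) k)"
    by (simp only: harm_binomial_sum_def atLeast0AtMost lessThan_Suc_atMost)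
  have "rec_coeff0 (real n) * (real n + 1) * harm_binomial_sum n
        + rec_coeff1 (real n) * harm_binomial_sum (Suc n)
      = (\<Sum>k<Suc (Suc n). rec_coeff0 (real n) * (real n + 1) * summand n k
          + rec_coeff1 (real n) * summand (Suc n) k)"
    by (simp only: sum_n sum_Suc sum.distrib sum_distrib_left)
  also have "\<dots> = (\<Sum>k<Suc (Suc n). certificate n (Suc k) - certificate n k)"
    by (simp only: summand_telescoping)
  also have "\<dots> = certificate n (Suc (Suc n)) - certificate n 0"
    by (rule sum_lessThan_telescope)
  also have "\<dots> = - cert_rest_num (real n) 0"
  proof -
    have "hyper_term (Suc n) (Suc (Suc n)) = 0" "hyper_term (Suc n) 0 = 1"
      by (simp_all add: hyper_term_def binomial_eq_0 del: binomial_Suc_Suc)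
    then show ?thesis
      by (simp add: certificate_def cert_harm_coeff_def cert_rest_def)
  qed
  finally show ?thesis .
qed

lemma closed_form_recurrence:
  fixes x e :: real
  assumes nz: "2*x \<noteq> 5" "2*x \<noteq> 3" "2*x \<noteq> 1" "2*x + 1 \<noteq> 0" "2*x + 3 \<noteq> 0"
  shows "rec_coeff0 x * (x + 1) * closed_form x e
      + rec_coeff1 x * closed_form (x + 1) (e + 2 / (2*x + 3)) = - cert_rest_num x 0"
proof -
  have factor: "4*x^2 - 1 = (2*x - 1) * (2*x + 1)" "4*(x + 1)^2 - 1 = (2*x + 1) * (2*x + 3)"
      "2*(x + 1) - 3 = 2*x - 1" "2*(x + 1) - 5 = 2*x - 3"
    by (simp_all add: algebra_simps power2_eq_square)
  show ?thesis
    unfolding closed_form_def factor rec_coeff0_def rec_coeff1_def cert_rest_num_def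
    by (simp add: divide_simps nz) algebra
qed

lemma two_times_real_ne_odd: "odd m \<Longrightarrow> 2 * real n \<noteq> real m"
  by (metis even_mult_iff even_numeral of_nat_eq_iff of_nat_mult of_nat_numeral)

lemma harm_binomial_sum_closed_form:
  "harm_binomial_sum n = closed_form (real n) (2 * harm (1 + 2*n) - harm n)"
proof (induction n)
  case 0
  show ?case
    by (simp add: harm_binomial_sum_def summand_def closed_form_def)
next
  case (Suc n)
  show ?case
  proof (cases "n = 0")
    case True
    have "(harm 3 :: real) = 11/6"
      by (simp add: harm_def eval_nat_numeral)
    with True show ?thesis
      by (simp add: harm_binomial_sum_def summand_def hyper_term_def closed_form_def eval_nat_numeral harm_Suc)
  next
    case False
    define x e where "x = real n" and "e = (2 * harm (1 + 2*n) - harm n :: real)"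
    have "x \<ge> 1"
      using False by (simp add: x_def)
    have nz: "2*x \<noteq> 5" "2*x \<noteq> 3" "2*x \<noteq> 1" "2*x + 1 \<noteq> 0" "2*x + 3 \<noteq> 0"
      using two_times_real_ne_odd[of 5 n] two_times_real_ne_odd[of 3 n] two_times_real_ne_odd[of 1 n]
      by (simp_all add: x_def)
    with \<open>x \<ge> 1\<close> have "rec_coeff1 x \<noteq> 0"
      by (auto simp: rec_coeff1_def)
    moreover have "rec_coeff0 x * (x + 1) * closed_form x e + rec_coeff1 x * harm_binomial_sum (Suc n)
        = - cert_rest_num x 0"
      using harm_binomial_sum_recurrence[of n, unfolded Suc.IH] unfolding x_def e_def .
    with closed_form_recurrence[OF nz, of e]
    have "rec_coeff1 x * harm_binomial_sum (Suc n)
        = rec_coeff1 x * closed_form (x + 1) (e + 2 / (2*x + 3))"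
      by linarith
    ultimately have "harm_binomial_sum (Suc n) = closed_form (x + 1) (e + 2 / (2*x + 3))"
      by simp
    then show ?thesis
      unfolding harm_odd_combination_Suc x_def e_def by (simp add: add.commute)
  qed
qed

theorem theorem6:
  fixes n :: nat
  shows "(\<Sum>k=0..n. (-4::real)^k * (real (n choose k) / real ((1 + 2*k) choose k))
            * (real k)^2 * harm (1 + 2*k))
       = 2 * real n * (4 * real n - 1) * (2 * harm (1 + 2*n) - harm n)
           / ((4 * (real n)^2 - 1) * (2 * real n - 3) * (2 * real n - 5))
         - 2 * real n * (32 * (real n)^6 + 160 * (real n)^5 - 544 * (real n)^4
             - 560 * (real n)^3 + 1482 * (real n)^2 - 382 * real n - 17)
           / ((4 * (real n)^2 - 1)^2 * (2 * real n - 3)^2 * (2 * real n - 5)^2)"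
  using harm_binomial_sum_closed_form[of n]
  unfolding harm_binomial_sum_def summand_def hyper_term_def closed_form_def .

end
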